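(* Let $\alpha\in(0,1)$ and $\nu\in\mathbb{N}$ with $2\nu>1/(1-\alpha)$, and let $K_{\alpha,\nu}(x)=\sum_{k=0}^{\infty}2^{-2\alpha\nu k}\phi(2^{2\nu k}x)$, where $\phi$ is the $2$-periodic function with $\phi(x)=|x|$ on $[-1,1]$. Then for every $x\in\mathbb{R}$ and every $\beta\in(\alpha,1]$, \[ \limsup_{t\to0}\frac{|K_{\alpha,\nu}(x+t)-K_{\alpha,\nu}(x)|}{|t|^{\beta}}=+\infty; \] hence $K_{\alpha,\nu}$ is at no point pointwise H\"older continuous of order $\beta$, and in particular (case $\beta=1$) $K_{\alpha,\nu}$ is differentiable at no point of $\mathbb{R}$. Moreover, for every $M\ge1$, \[ \limsup_{t\to0}\frac{1}{2M}\int_{-M}^{M}\left|\frac{K_{\alpha,\nu}(x+t)-K_{\alpha,\nu}(x)}{t}\right|dx=+\infty, \] so the difference quotients of $K_{\alpha,\nu}$ are unbounded in $L^1_{loc}(\mathbb{R})$ and the distributional derivative of $K_{\alpha,\nu}$ is not a signed (Radon) measure, i.e. $K_{\alpha,\nu}$ is not of locally bounded variation.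
   Context: A function $f\in C^0(\mathbb{R})$ is called (pointwise) H\"older continuous of order $\beta$ at $x$ if there exist $r,C>0$ with $|f(y)-f(x)|\le C|y-x|^{\beta}$ for all $y\in[x-r,x+r]$. *)

theory Defs
  imports "HOL-Analysis.Analysis"
begin

text \<open>The 2-periodic function with phi x = |x| on [-1,1] (distance to the nearest even integer).\<close>
definition phi :: "real \<Rightarrow> real" where
  "phi x = \<bar>x - 2 * real_of_int \<lfloor>(x + 1) / 2\<rfloor>\<bar>"

definition K :: "real \<Rightarrow> nat \<Rightarrow> real \<Rightarrow> real" where
  "K \<alpha> \<nu> x = (\<Sum>k. 2 powr (- 2 * \<alpha> * real \<nu> * real k) * phi (2 ^ (2 * \<nu> * k) * x))"

definition holder_at :: "(real \<Rightarrow> real) \<Rightarrow> real \<Rightarrow> real \<Rightarrow> bool" where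
  "holder_at f \<beta> x \<longleftrightarrow> (\<exists>r>0. \<exists>C>0. \<forall>y\<in>{x - r..x + r}. \<bar>f y - f x\<bar> \<le> C * \<bar>y - x\<bar> powr \<beta>)"

definition bv_on :: "(real \<Rightarrow> real) \<Rightarrow> real \<Rightarrow> real \<Rightarrow> bool" where
  "bv_on f a b \<longleftrightarrow> (\<exists>B. \<forall>(n::nat) (xs::nat \<Rightarrow> real).
      (\<forall>i\<le>n. a \<le> xs i \<and> xs i \<le> b) \<and> (\<forall>i<n. xs i \<le> xs (Suc i)) \<longrightarrow>
      (\<Sum>i<n. \<bar>f (xs (Suc i)) - f (xs i)\<bar>) \<le> B)"

definition locally_bv :: "(real \<Rightarrow> real) \<Rightarrow> bool" where
  "locally_bv f \<longleftrightarrow> (\<forall>a b. bv_on f a b)"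

end

theory Submission
  imports Defs
begin

text \<open>
  K is the lacunary series of the terms a^k phi(b^k x) with b = 4^nu and a = b^(-alpha); the
  hypothesis on nu says exactly that a b > 2. At scale n, move x by +-1/(2 b^n) in the direction in
  which phi(b^n _) changes by 1/2. Since 4 divides b, all later terms are unchanged (phi is
  2-periodic), the n-th term changes by a^n/2, and the earlier terms, phi being 1-Lipschitz, change by
  at most a^n/(2(ab-1)) altogether. So K oscillates by at least c a^n, with c = (ab-2)/(2(ab-1)) > 0,
  over a distance 1/(2 b^n), and the Hoelder quotients of order beta grow like (a b^beta)^n. The shift
  +1/(2 b^n) works on the left half of every interval [j/b^n, (j+1)/b^n], so the mean difference
  quotients and the variation on [0,1] grow like (ab)^n.
\<close>

lemma dist_to_distinct_even_ints:
  fixes x :: real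
  assumes "m \<noteq> k"
  shows "2 \<le> \<bar>x - 2 * of_int m\<bar> + \<bar>x - 2 * of_int k\<bar>"
proof -
  have "1 \<le> \<bar>m - k\<bar>" using assms by linarith
  then have "1 \<le> \<bar>real_of_int m - real_of_int k\<bar>"
    by (metis of_int_1_le_iff of_int_abs of_int_diff)
  then show ?thesis by linarith
qed

lemma floor_half_shift_bounds:
  fixes x :: real
  shows "-1 \<le> x - 2 * of_int \<lfloor>(x + 1) / 2\<rfloor> \<and> x - 2 * of_int \<lfloor>(x + 1) / 2\<rfloor> < 1"
  using of_int_floor_le[of "(x + 1) / 2"] real_of_int_floor_add_one_gt[of "(x + 1) / 2"]
  by (simp add: field_simps)

lemma phi_nonneg: "0 \<le> phi x"
  by (simp add: phi_def)

lemma phi_le_1: "phi x \<le> 1"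
  using floor_half_shift_bounds[of x] unfolding phi_def by linarith

lemma phi_le_dist_even: "phi x \<le> \<bar>x - 2 * of_int m\<bar>"
proof (cases "m = \<lfloor>(x + 1) / 2\<rfloor>")
  case False
  then show ?thesis
    using dist_to_distinct_even_ints[OF False, of x] floor_half_shift_bounds[of x]
    unfolding phi_def by linarith
qed (simp add: phi_def)

lemma phi_eq_dist_even:
  assumes "\<bar>x - 2 * of_int m\<bar> \<le> 1"
  shows "phi x = \<bar>x - 2 * of_int m\<bar>"
proof (cases "m = \<lfloor>(x + 1) / 2\<rfloor>")
  case False
  then show ?thesis
    using assms dist_to_distinct_even_ints[OF False, of x] floor_half_shift_bounds[of x]
    unfolding phi_def by linarith
qed (simp add: phi_def)

lemma phi_lipschitz: "\<bar>phi x - phi y\<bar> \<le> \<bar>x - y\<bar>"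
  using phi_le_dist_even[of y "\<lfloor>(x + 1) / 2\<rfloor>"] phi_le_dist_even[of x "\<lfloor>(y + 1) / 2\<rfloor>"]
  unfolding phi_def by linarith

lemma phi_periodic: "phi (x + 2 * of_int m) = phi x"
  using phi_le_dist_even[of "x + 2 * of_int m" "\<lfloor>(x + 1) / 2\<rfloor> + m"]
    phi_le_dist_even[of x "\<lfloor>(x + 2 * of_int m + 1) / 2\<rfloor> - m"]
  unfolding phi_def by (simp add: algebra_simps)

lemma phi_on_unit_interval:
  assumes "of_int m \<le> x" "x \<le> of_int m + 1"
  shows "phi x = (if even m then x - of_int m else of_int m + 1 - x)"
proof (cases "even m")
  case True
  then obtain k where "m = 2 * k" by blast
  with assms True show ?thesis using phi_eq_dist_even[of x k] by simp
next
  case False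
  then obtain k where "m + 1 = 2 * k" by (metis evenE even_plus_one_iff)
  then have "of_int m + 1 = 2 * real_of_int k" by (metis of_int_1 of_int_add of_int_mult of_int_numeral)
  with assms False show ?thesis using phi_eq_dist_even[of x k] by simp
qed

lemma phi_half_step_right:
  assumes "of_int m \<le> x" "x \<le> of_int m + 1 / 2"
  shows "\<bar>phi (x + 1 / 2) - phi x\<bar> = 1 / 2"
  using assms phi_on_unit_interval[of m x] phi_on_unit_interval[of m "x + 1 / 2"] by auto

lemma phi_half_step: "\<exists>s\<in>{1, -1::int}. \<bar>phi (x + of_int s / 2) - phi x\<bar> = 1 / 2"
proof (cases "x \<le> of_int \<lfloor>x\<rfloor> + 1 / 2")
  case True
  then show ?thesis using phi_half_step_right[of "\<lfloor>x\<rfloor>" x] by force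
next
  case False
  then have "\<bar>phi (x - 1 / 2) - phi x\<bar> = 1 / 2"
    using phi_on_unit_interval[of "\<lfloor>x\<rfloor>" x] phi_on_unit_interval[of "\<lfloor>x\<rfloor>" "x - 1 / 2"]
      real_of_int_floor_add_one_gt[of x] by auto
  then show ?thesis by force
qed

lemma continuous_on_phi: "continuous_on UNIV phi"
  by (rule lipschitz_on_continuous_on[of 1]) (auto intro: lipschitz_onI simp: dist_real_def phi_lipschitz)

lemma Limsup_eq_infinity_if_filterlim:
  fixes f :: "'a \<Rightarrow> real" and t :: "'b \<Rightarrow> 'a"
  assumes "filterlim t F G" "G \<noteq> bot" "filterlim (\<lambda>n. f (t n)) at_top G"
  shows "Limsup F (\<lambda>x. ereal (f x)) = \<infinity>"
  unfolding Limsup_def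
proof (rule ereal_top, rule INF_greatest)
  fix B :: real and P
  assume "P \<in> {P. eventually P F}"
  then have "eventually (\<lambda>n. P (t n) \<and> B \<le> f (t n)) G"
    using assms(1,3) by (auto simp: filterlim_iff filterlim_at_top intro: eventually_conj)
  then obtain n where "P (t n)" "B \<le> f (t n)"
    using eventually_happens'[OF assms(2)] by blast
  then show "ereal B \<le> (SUP x\<in>Collect P. ereal (f x))"
    by (intro SUP_upper2[of "t n"]) auto
qed

lemma filterlim_mult_power_at_top:
  fixes c q :: real
  assumes "0 < c" "1 < q"
  shows "filterlim (\<lambda>n. c * q ^ n) at_top sequentially"
  using assms
  by (intro filterlim_tendsto_pos_mult_at_top[OF tendsto_const] filterlim_at_infinity_imp_filterlim_at_top
      filterlim_realpow_sequentially_gt1) auto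

lemma holder_at_imp_Limsup_less_infinity:
  assumes "holder_at f \<beta> x"
  shows "Limsup (at 0) (\<lambda>t. ereal (\<bar>f (x + t) - f x\<bar> / \<bar>t\<bar> powr \<beta>)) < \<infinity>"
proof -
  obtain r C where "0 < r" and C: "\<And>y. y \<in> {x - r..x + r} \<Longrightarrow> \<bar>f y - f x\<bar> \<le> C * \<bar>y - x\<bar> powr \<beta>"
    using assms unfolding holder_at_def by blast
  have "\<bar>f (x + t) - f x\<bar> / \<bar>t\<bar> powr \<beta> \<le> C" if "t \<noteq> 0" "\<bar>t\<bar> < r" for t
  proof -
    have "x + t \<in> {x - r..x + r}" using that(2) by auto
    moreover have "0 < \<bar>t\<bar> powr \<beta>" using that(1) by simp
    ultimately show ?thesis using C[of "x + t"] by (simp add: pos_divide_le_eq mult.commute)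
  qed
  then have "eventually (\<lambda>t. \<bar>f (x + t) - f x\<bar> / \<bar>t\<bar> powr \<beta> \<le> C) (at 0)"
    unfolding eventually_at dist_real_def using \<open>0 < r\<close> by (intro exI[of _ r]) auto
  then have "Limsup (at 0) (\<lambda>t. ereal (\<bar>f (x + t) - f x\<bar> / \<bar>t\<bar> powr \<beta>)) \<le> ereal C"
    by (intro Limsup_bounded) auto
  then show ?thesis
    by (rule order.strict_trans1) simp
qed

lemma differentiable_imp_holder_at_1:
  assumes "f differentiable (at x)"
  shows "holder_at f 1 x"
proof -
  have "((\<lambda>y. (f y - f x) / (y - x)) \<longlongrightarrow> deriv f x) (at x)"
    using assms DERIV_deriv_iff_real_differentiable has_field_derivative_iff by blast
  then have "eventually (\<lambda>y. dist ((f y - f x) / (y - x)) (deriv f x) < 1) (at x)"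
    by (rule tendstoD) simp
  then obtain d where "0 < d"
    and d: "\<And>y. y \<noteq> x \<and> dist y x < d \<Longrightarrow> dist ((f y - f x) / (y - x)) (deriv f x) < 1"
    by (auto simp: eventually_at)
  have "\<bar>f y - f x\<bar> \<le> (\<bar>deriv f x\<bar> + 1) * \<bar>y - x\<bar> powr 1" if "y \<in> {x - d / 2..x + d / 2}" for y
  proof (cases "y = x")
    case False
    have "\<bar>y - x\<bar> < d" using that \<open>0 < d\<close> by auto
    then have "\<bar>(f y - f x) / (y - x) - deriv f x\<bar> < 1"
      using d[of y] False by (simp add: dist_real_def)
    then have "\<bar>(f y - f x) / (y - x)\<bar> \<le> \<bar>deriv f x\<bar> + 1"
      by linarith
    with False show ?thesis by (simp add: abs_divide pos_divide_le_eq)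
  qed simp
  then show ?thesis
    unfolding holder_at_def using \<open>0 < d\<close>
    by (intro exI[of _ "d / 2"] exI[of _ "\<bar>deriv f x\<bar> + 1"] conjI) simp_all
qed

lemma integrable_abs_difference_quotient:
  fixes f :: "real \<Rightarrow> real"
  assumes "continuous_on UNIV f"
  shows "(\<lambda>x. \<bar>(f (x + t) - f x) / t\<bar>) integrable_on {u..v}"
proof -
  have "continuous_on UNIV (\<lambda>x. f (x + t))"
    using continuous_on_compose2[OF assms continuous_on_add[OF continuous_on_id continuous_on_const]]
    by simp
  then have "continuous_on UNIV (\<lambda>x. \<bar>(f (x + t) - f x) / t\<bar>)"
    unfolding divide_inverse using assms by (intro continuous_intros)
  then have "continuous_on {u..v} (\<lambda>x. \<bar>(f (x + t) - f x) / t\<bar>)"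
    by (rule continuous_on_subset) simp
  then show ?thesis
    by (rule integrable_continuous_interval)
qed

lemma integral_unit_interval_ge_left_halves:
  fixes g :: "real \<Rightarrow> real" and L :: nat
  assumes "0 < L" and integrable: "\<And>u v. g integrable_on {u..v}" and "\<And>x. 0 \<le> g x"
    and left_halves: "\<And>x j. real j \<le> real L * x \<Longrightarrow> real L * x \<le> real j + 1 / 2 \<Longrightarrow> c \<le> g x"
  shows "c / 2 \<le> integral {0..1} g"
proof -
  have "real J * c / (2 * real L) \<le> integral {0..real J / real L} g" for J
  proof (induction J)
    case (Suc J)
    define u m v where "u = real J / real L" and "m = (real J + 1 / 2) / real L" and "v = real (Suc J) / real L"
    have "0 \<le> u" "u \<le> m" "m \<le> v"
      using \<open>0 < L\<close> by (auto simp: u_def m_def v_def divide_right_mono)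
    have "integral {u..m} (\<lambda>_. c) \<le> integral {u..m} g"
    proof (rule integral_le[OF integrable_const_ivl integrable])
      fix x assume "x \<in> {u..m}"
      then show "c \<le> g x"
        using \<open>0 < L\<close> left_halves[of J x] by (auto simp: u_def m_def field_simps)
    qed
    moreover have "integral {u..m} (\<lambda>_. c) = c / (2 * real L)"
      using \<open>u \<le> m\<close> \<open>0 < L\<close> by (simp add: u_def m_def field_simps)
    moreover have "0 \<le> integral {m..v} g"
      using assms(3) by (intro integral_nonneg integrable) auto
    moreover have "integral {0..v} g = integral {0..u} g + integral {u..m} g + integral {m..v} g"
      using Henstock_Kurzweil_Integration.integral_combine[OF \<open>0 \<le> u\<close> order.trans[OF \<open>u \<le> m\<close> \<open>m \<le> v\<close>] integrable]
        Henstock_Kurzweil_Integration.integral_combine[OF \<open>u \<le> m\<close> \<open>m \<le> v\<close> integrable]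
      by simp
    moreover have "real J * c / (2 * real L) \<le> integral {0..u} g"
      using Suc.IH by (simp add: u_def)
    moreover have "real (Suc J) * c / (2 * real L) = real J * c / (2 * real L) + c / (2 * real L)"
      by (simp add: add_divide_distrib distrib_right)
    ultimately show ?case
      unfolding v_def[symmetric] by linarith
  qed simp
  from this[of L] show ?thesis
    using \<open>0 < L\<close> by simp
qed

lemma power_powr:
  fixes x :: real
  assumes "0 < x"
  shows "(x ^ n) powr y = (x powr y) ^ n"
  using assms by (simp add: powr_realpow[symmetric] powr_powr powr_power mult.commute)

definition vdw_function :: "real \<Rightarrow> real \<Rightarrow> real \<Rightarrow> real" where
  "vdw_function a b x = (\<Sum>k. a ^ k * phi (b ^ k * x))"

lemma summable_vdw_terms:
  assumes "0 \<le> a" "a < 1"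
  shows "summable (\<lambda>k. a ^ k * phi (b ^ k * x))"
proof (rule summable_comparison_test)
  show "\<exists>N. \<forall>k\<ge>N. norm (a ^ k * phi (b ^ k * x)) \<le> a ^ k"
    using assms phi_le_1 phi_nonneg by (auto intro!: mult_left_le)
  show "summable (\<lambda>k. a ^ k)" using assms by (simp add: summable_geometric)
qed

lemma continuous_on_vdw_function:
  assumes "0 \<le> a" "a < 1"
  shows "continuous_on UNIV (vdw_function a b)"
proof -
  have "uniform_limit UNIV (\<lambda>n x. \<Sum>k<n. a ^ k * phi (b ^ k * x)) (vdw_function a b) sequentially"
    unfolding vdw_function_def[abs_def]
  proof (rule Weierstrass_m_test)
    show "summable (\<lambda>k. a ^ k)" using assms by (simp add: summable_geometric)
    show "norm (a ^ k * phi (b ^ k * x)) \<le> a ^ k" for k x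
      using assms phi_le_1 phi_nonneg by (auto intro!: mult_left_le)
  qed
  moreover have "continuous_on UNIV (\<lambda>x. \<Sum>k<n. a ^ k * phi (b ^ k * x))" for n
    by (intro continuous_intros continuous_on_compose2[OF continuous_on_phi]) auto
  ultimately show ?thesis
    by (intro uniform_limit_theorem[of _ "\<lambda>n x. \<Sum>k<n. a ^ k * phi (b ^ k * x)"]) auto
qed

lemma vdw_partial_sum_increment_le:
  assumes "0 \<le> a" "0 \<le> b" "1 < a * b"
  shows "\<bar>\<Sum>k<n. a ^ k * (phi (b ^ k * (x + h)) - phi (b ^ k * x))\<bar> \<le> (a * b) ^ n / (a * b - 1) * \<bar>h\<bar>"
proof -
  have "\<bar>\<Sum>k<n. a ^ k * (phi (b ^ k * (x + h)) - phi (b ^ k * x))\<bar> \<le> (\<Sum>k<n. (a * b) ^ k * \<bar>h\<bar>)"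
  proof (rule order.trans[OF sum_abs sum_mono])
    fix k
    have "\<bar>phi (b ^ k * (x + h)) - phi (b ^ k * x)\<bar> \<le> b ^ k * \<bar>h\<bar>"
      using phi_lipschitz[of "b ^ k * (x + h)" "b ^ k * x"] assms by (simp add: algebra_simps abs_mult)
    then show "\<bar>a ^ k * (phi (b ^ k * (x + h)) - phi (b ^ k * x))\<bar> \<le> (a * b) ^ k * \<bar>h\<bar>"
      using assms by (simp add: abs_mult power_mult_distrib mult.assoc mult_left_mono)
  qed
  also have "\<dots> = ((a * b) ^ n - 1) / (a * b - 1) * \<bar>h\<bar>"
    using assms sum_gp_strict[of "a * b" n]
    by (simp add: sum_distrib_right[symmetric] divide_simps) argo
  also have "\<dots> \<le> (a * b) ^ n / (a * b - 1) * \<bar>h\<bar>"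
    using assms by (intro mult_right_mono divide_right_mono) auto
  finally show ?thesis .
qed

locale vdw_parameters =
  fixes a :: real and b :: nat
  assumes a_pos: "0 < a" and a_less_1: "a < 1" and four_dvd_b: "4 dvd b" and ab_gt_2: "2 < a * b"
begin

abbreviation W :: "real \<Rightarrow> real" where
  "W \<equiv> vdw_function a (real b)"

definition jump_const :: real where
  "jump_const = (a * b - 2) / (2 * (a * b - 1))"

lemma jump_const_pos: "0 < jump_const"
  using ab_gt_2 by (simp add: jump_const_def)

lemma ab_gt_1: "1 < a * b"
  using ab_gt_2 by simp

lemma b_ge_4: "4 \<le> b"
  using four_dvd_b ab_gt_2 by (cases "b = 0") (auto dest: dvd_imp_le)

lemma continuous_on_W: "continuous_on UNIV W"
  using a_pos a_less_1 by (intro continuous_on_vdw_function) auto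

lemma phi_shift_invariant_beyond_scale:
  assumes "n < k"
  shows "phi (real b ^ k * (x + of_int s / (2 * real b ^ n))) = phi (real b ^ k * x)"
proof -
  obtain c where c: "b ^ (k - n) = 4 * c"
    using dvd_trans[OF four_dvd_b dvd_power[of "k - n" b]] assms by auto
  have "real b ^ k = real b ^ n * (4 * real c)"
    using assms c by (metis less_imp_le_nat le_add_diff_inverse power_add of_nat_power of_nat_mult of_nat_numeral)
  then have "real b ^ k * (x + of_int s / (2 * real b ^ n)) = real b ^ k * x + 2 * of_int (s * int c)"
    using b_ge_4 by (simp add: field_simps)
  then show ?thesis by (metis phi_periodic)
qed

lemma W_increment_eq_partial_sum:
  fixes s :: int and n :: nat
  defines "h \<equiv> of_int s / (2 * real b ^ n)"
  shows "W (x + h) - W x = (\<Sum>k\<le>n. a ^ k * (phi (real b ^ k * (x + h)) - phi (real b ^ k * x)))"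
proof -
  have "W (x + h) - W x = (\<Sum>k. a ^ k * (phi (real b ^ k * (x + h)) - phi (real b ^ k * x)))"
    unfolding vdw_function_def right_diff_distrib
    using a_pos a_less_1 by (intro suminf_diff summable_vdw_terms) auto
  also have "\<dots> = (\<Sum>k\<le>n. a ^ k * (phi (real b ^ k * (x + h)) - phi (real b ^ k * x)))"
    by (rule suminf_finite) (auto simp: h_def phi_shift_invariant_beyond_scale)
  finally show ?thesis .
qed

lemma W_jump:
  assumes "s \<in> {1, -1}" "\<bar>phi (real b ^ n * x + of_int s / 2) - phi (real b ^ n * x)\<bar> = 1 / 2"
  shows "jump_const * a ^ n \<le> \<bar>W (x + of_int s / (2 * real b ^ n)) - W x\<bar>"
proof -
  define h where "h = of_int s / (2 * real b ^ n)"
  define d where "d k = a ^ k * (phi (real b ^ k * (x + h)) - phi (real b ^ k * x))" for k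
  have bn: "0 < real b ^ n" using b_ge_4 by simp
  have h_abs: "\<bar>h\<bar> = 1 / (2 * real b ^ n)" using assms(1) bn by (auto simp: h_def)
  have "W (x + h) - W x = (\<Sum>k<n. d k) + d n"
    unfolding h_def d_def W_increment_eq_partial_sum lessThan_Suc_atMost[symmetric] by simp
  moreover have "\<bar>d n\<bar> = a ^ n / 2"
    using assms(2) a_pos bn by (simp add: d_def h_def abs_mult distrib_left)
  moreover have "\<bar>\<Sum>k<n. d k\<bar> \<le> a ^ n / (2 * (a * b - 1))"
  proof -
    have "\<bar>\<Sum>k<n. d k\<bar> \<le> (a * b) ^ n / (a * b - 1) * \<bar>h\<bar>"
      unfolding d_def using a_pos ab_gt_2 by (intro vdw_partial_sum_increment_le) auto
    also have "\<dots> = a ^ n / (2 * (a * b - 1))"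
      using ab_gt_2 bn unfolding h_abs by (simp add: power_mult_distrib field_simps)
    finally show ?thesis .
  qed
  moreover have "jump_const * a ^ n = a ^ n / 2 - a ^ n / (2 * (a * b - 1))"
    using ab_gt_2 by (simp add: jump_const_def field_simps)
  ultimately show ?thesis unfolding h_def by linarith
qed

lemma W_jump_somewhere:
  obtains t where "\<bar>t\<bar> = 1 / (2 * real b ^ n)" "jump_const * a ^ n \<le> \<bar>W (x + t) - W x\<bar>"
proof -
  obtain s :: int where "s \<in> {1, -1}" "\<bar>phi (real b ^ n * x + of_int s / 2) - phi (real b ^ n * x)\<bar> = 1 / 2"
    using phi_half_step by blast
  moreover have "0 < real b ^ n"
    using b_ge_4 by simp
  ultimately show ?thesis
    using W_jump that[of "of_int s / (2 * real b ^ n)"] by auto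
qed

lemma W_jump_right:
  assumes "of_int j \<le> real b ^ n * x" "real b ^ n * x \<le> of_int j + 1 / 2"
  shows "jump_const * a ^ n \<le> \<bar>W (x + 1 / (2 * real b ^ n)) - W x\<bar>"
  using W_jump[of 1 n x] phi_half_step_right[OF assms] by simp

lemma filterlim_at_0_if_abs_eq_scale:
  assumes "\<And>n. \<bar>t n\<bar> = 1 / (2 * real b ^ n)"
  shows "filterlim t (at 0) sequentially"
proof -
  have "(\<lambda>n. inverse (real b ^ n) / 2) \<longlonglongrightarrow> 0"
    using b_ge_4 by (intro tendsto_divide_zero LIMSEQ_inverse_realpow_zero) simp
  then have "t \<longlonglongrightarrow> 0"
    by (subst tendsto_rabs_zero_iff[symmetric]) (simp add: assms field_simps)
  moreover have "t n \<noteq> 0" for n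
    using assms[of n] b_ge_4 by auto
  ultimately show ?thesis
    by (simp add: filterlim_at)
qed

lemma Limsup_W_holder_quotient:
  assumes "1 < a * real b powr \<beta>"
  shows "Limsup (at 0) (\<lambda>t. ereal (\<bar>W (x + t) - W x\<bar> / \<bar>t\<bar> powr \<beta>)) = \<infinity>"
proof -
  have "\<forall>n. \<exists>t. \<bar>t\<bar> = 1 / (2 * real b ^ n) \<and> jump_const * a ^ n \<le> \<bar>W (x + t) - W x\<bar>"
    by (metis W_jump_somewhere)
  from choice[OF this] obtain t where abs_t: "\<And>n. \<bar>t n\<bar> = 1 / (2 * real b ^ n)"
    and jump: "\<And>n. jump_const * a ^ n \<le> \<bar>W (x + t n) - W x\<bar>"
    by blast
  have "filterlim t (at 0) sequentially"
    using abs_t by (rule filterlim_at_0_if_abs_eq_scale)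
  moreover have "jump_const * 2 powr \<beta> * (a * real b powr \<beta>) ^ n \<le> \<bar>W (x + t n) - W x\<bar> / \<bar>t n\<bar> powr \<beta>" for n
  proof -
    have "\<bar>t n\<bar> powr \<beta> = 1 / (2 powr \<beta> * (real b powr \<beta>) ^ n)"
      using b_ge_4 by (simp add: abs_t powr_divide powr_mult power_powr)
    then have "\<bar>W (x + t n) - W x\<bar> / \<bar>t n\<bar> powr \<beta> = \<bar>W (x + t n) - W x\<bar> * (2 powr \<beta> * (real b powr \<beta>) ^ n)"
      by simp
    moreover have "jump_const * a ^ n * (2 powr \<beta> * (real b powr \<beta>) ^ n)
        \<le> \<bar>W (x + t n) - W x\<bar> * (2 powr \<beta> * (real b powr \<beta>) ^ n)"
      using jump[of n] by (intro mult_right_mono) auto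
    ultimately show ?thesis
      by (simp add: power_mult_distrib mult_ac)
  qed
  then have "filterlim (\<lambda>n. \<bar>W (x + t n) - W x\<bar> / \<bar>t n\<bar> powr \<beta>) at_top sequentially"
    using jump_const_pos assms
    by (intro filterlim_at_top_mono[OF filterlim_mult_power_at_top[of "jump_const * 2 powr \<beta>"] always_eventually])
      auto
  ultimately show ?thesis
    by (intro Limsup_eq_infinity_if_filterlim[where t = t and G = sequentially]) auto
qed

lemma W_difference_quotient_integral_ge:
  fixes n :: nat
  defines "t \<equiv> 1 / (2 * real b ^ n)"
  shows "jump_const * (a * b) ^ n \<le> integral {0..1} (\<lambda>x. \<bar>(W (x + t) - W x) / t\<bar>)"
proof -
  have bn: "0 < real b ^ n" using b_ge_4 by simp
  have "2 * real (b ^ n) * (jump_const * a ^ n) / 2 \<le> integral {0..1} (\<lambda>x. \<bar>(W (x + t) - W x) / t\<bar>)"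
  proof (rule integral_unit_interval_ge_left_halves)
    show "0 < b ^ n" using b_ge_4 by simp
    show "(\<lambda>x. \<bar>(W (x + t) - W x) / t\<bar>) integrable_on {u..v}" for u v
      using continuous_on_W by (rule integrable_abs_difference_quotient)
    fix x :: real and j :: nat
    assume "real j \<le> real (b ^ n) * x" "real (b ^ n) * x \<le> real j + 1 / 2"
    then have "jump_const * a ^ n \<le> \<bar>W (x + t) - W x\<bar>"
      unfolding t_def by (intro W_jump_right[of "int j"]) auto
    then show "2 * real (b ^ n) * (jump_const * a ^ n) \<le> \<bar>(W (x + t) - W x) / t\<bar>"
      using bn by (simp add: t_def abs_mult)
  qed (simp add: t_def)
  then show ?thesis
    by (simp add: power_mult_distrib mult_ac)
qed

lemma Limsup_W_mean_difference_quotient: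
  assumes "1 \<le> M"
  shows "Limsup (at 0) (\<lambda>t. ereal (1 / (2 * M) * integral {-M..M} (\<lambda>x. \<bar>(W (x + t) - W x) / t\<bar>))) = \<infinity>"
proof -
  define t where "t n = 1 / (2 * real b ^ n)" for n
  have "filterlim t (at 0) sequentially"
    using b_ge_4 by (intro filterlim_at_0_if_abs_eq_scale) (simp add: t_def)
  moreover have "jump_const / (2 * M) * (a * b) ^ n
      \<le> 1 / (2 * M) * integral {-M..M} (\<lambda>x. \<bar>(W (x + t n) - W x) / t n\<bar>)" for n
  proof -
    have "integral {0..1} (\<lambda>x. \<bar>(W (x + t n) - W x) / t n\<bar>)
        \<le> integral {-M..M} (\<lambda>x. \<bar>(W (x + t n) - W x) / t n\<bar>)"
      using assms continuous_on_W by (intro integral_subset_le integrable_abs_difference_quotient) auto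
    then show ?thesis
      using W_difference_quotient_integral_ge[of n] assms unfolding t_def by (simp add: field_simps)
  qed
  then have "filterlim (\<lambda>n. 1 / (2 * M) * integral {-M..M} (\<lambda>x. \<bar>(W (x + t n) - W x) / t n\<bar>))
      at_top sequentially"
    using jump_const_pos assms ab_gt_1
    by (intro filterlim_at_top_mono[OF filterlim_mult_power_at_top[of "jump_const / (2 * M)"] always_eventually])
      auto
  ultimately show ?thesis
    by (intro Limsup_eq_infinity_if_filterlim[where t = t and G = sequentially]) auto
qed

lemma W_variation_ge:
  fixes n :: nat
  defines "x \<equiv> \<lambda>i. real i / (2 * real b ^ n)"
  shows "jump_const * (a * b) ^ n \<le> (\<Sum>i < 2 * b ^ n. \<bar>W (x (Suc i)) - W (x i)\<bar>)"
proof -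
  have bn: "0 < real b ^ n" using b_ge_4 by simp
  have "jump_const * (a * b) ^ n = (\<Sum>j < b ^ n. jump_const * a ^ n)"
    by (simp add: power_mult_distrib)
  also have "\<dots> \<le> (\<Sum>j < b ^ n. \<bar>W (x (Suc (2 * j))) - W (x (2 * j))\<bar>)"
  proof (rule sum_mono)
    fix j
    have "x (Suc (2 * j)) = x (2 * j) + 1 / (2 * real b ^ n)" "real b ^ n * x (2 * j) = of_int (int j)"
      using bn by (simp_all add: x_def field_simps)
    then show "jump_const * a ^ n \<le> \<bar>W (x (Suc (2 * j))) - W (x (2 * j))\<bar>"
      using W_jump_right[of "int j" n "x (2 * j)"] by simp
  qed
  also have "\<dots> = (\<Sum>i \<in> (\<lambda>j. 2 * j) ` {..< b ^ n}. \<bar>W (x (Suc i)) - W (x i)\<bar>)"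
    by (simp add: sum.reindex inj_on_def)
  also have "\<dots> \<le> (\<Sum>i < 2 * b ^ n. \<bar>W (x (Suc i)) - W (x i)\<bar>)"
    by (intro sum_mono2) auto
  finally show ?thesis .
qed

lemma not_bv_on_W: "\<not> bv_on W 0 1"
proof
  assume "bv_on W 0 1"
  then obtain B where B: "\<And>m xs. (\<forall>i\<le>m. 0 \<le> xs i \<and> xs i \<le> 1) \<and> (\<forall>i<m. xs i \<le> xs (Suc i)) \<Longrightarrow>
      (\<Sum>i<m. \<bar>W (xs (Suc i)) - W (xs i)\<bar>) \<le> B"
    unfolding bv_on_def by blast
  have "filterlim (\<lambda>n. jump_const * (a * b) ^ n) at_top sequentially"
    using jump_const_pos ab_gt_1 by (rule filterlim_mult_power_at_top)
  then obtain n where n: "B + 1 \<le> jump_const * (a * b) ^ n"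
    by (auto simp: filterlim_at_top eventually_sequentially)
  define x where "x i = real i / (2 * real b ^ n)" for i
  have "real i \<le> 2 * real b ^ n" if "i \<le> 2 * b ^ n" for i
    using that by (metis of_nat_le_iff of_nat_mult of_nat_numeral of_nat_power)
  then have "(\<Sum>i < 2 * b ^ n. \<bar>W (x (Suc i)) - W (x i)\<bar>) \<le> B"
    using b_ge_4 by (intro B) (auto simp: x_def field_simps)
  then show False
    using W_variation_ge[of n] n unfolding x_def by linarith
qed

end

lemma four_power_eq_powr: "(4::real) ^ \<nu> = 2 powr (2 * real \<nu>)"
proof -
  have "(4::real) ^ \<nu> = 2 ^ (2 * \<nu>)"
    by (simp add: power_mult)
  then show ?thesis
    by (simp add: powr_realpow[symmetric])
qed

lemma K_eq_vdw_function: "K \<alpha> \<nu> = vdw_function (real (4 ^ \<nu>) powr - \<alpha>) (real (4 ^ \<nu>))"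
proof
  fix x
  have "2 powr (- 2 * \<alpha> * real \<nu> * real k) = (real (4 ^ \<nu>) powr - \<alpha>) ^ k" for k
    by (simp add: four_power_eq_powr powr_powr powr_power mult_ac)
  moreover have "(2::real) ^ (2 * \<nu> * k) = real (4 ^ \<nu>) ^ k" for k
    by (simp add: power_mult)
  ultimately show "K \<alpha> \<nu> x = vdw_function (real (4 ^ \<nu>) powr - \<alpha>) (real (4 ^ \<nu>)) x"
    by (simp add: K_def vdw_function_def)
qed

lemma vdw_parameters_K:
  assumes "0 < \<alpha>" "\<alpha> < 1" and "1 / (1 - \<alpha>) < 2 * real \<nu>"
  shows "vdw_parameters (real (4 ^ \<nu>) powr - \<alpha>) (4 ^ \<nu>)"
proof
  have "1 < 2 * real \<nu> * (1 - \<alpha>)"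
    using assms by (simp add: field_simps)
  then have "0 < \<nu>"
    using assms by (cases \<nu>) auto
  have "2 powr 1 < 2 powr (2 * real \<nu> * (1 - \<alpha>))"
    using \<open>1 < 2 * real \<nu> * (1 - \<alpha>)\<close> by (intro powr_less_mono) auto
  also have "\<dots> = real (4 ^ \<nu>) powr - \<alpha> * real (4 ^ \<nu>)"
    by (simp add: four_power_eq_powr powr_powr powr_add[symmetric] algebra_simps)
  finally show "2 < real (4 ^ \<nu>) powr - \<alpha> * real (4 ^ \<nu>)"
    by simp
  have "2 powr (2 * real \<nu> * - \<alpha>) < 2 powr 0"
    using \<open>0 < \<nu>\<close> assms by (intro powr_less_mono) auto
  then show "real (4 ^ \<nu>) powr - \<alpha> < 1"
    by (simp add: four_power_eq_powr powr_powr)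
  show "4 dvd (4::nat) ^ \<nu>"
    using \<open>0 < \<nu>\<close> by simp
qed simp

theorem corollary2:
  fixes \<alpha> :: real and \<nu> :: nat
  assumes "0 < \<alpha>" "\<alpha> < 1" and "2 * real \<nu> > 1 / (1 - \<alpha>)"
  shows "(\<forall>x \<beta>. \<alpha> < \<beta> \<and> \<beta> \<le> 1 \<longrightarrow>
            Limsup (at 0) (\<lambda>t. ereal (\<bar>K \<alpha> \<nu> (x + t) - K \<alpha> \<nu> x\<bar> / \<bar>t\<bar> powr \<beta>)) = \<infinity>
            \<and> \<not> holder_at (K \<alpha> \<nu>) \<beta> x)
       \<and> (\<forall>x. \<not> (K \<alpha> \<nu>) differentiable (at x))
       \<and> (\<forall>M::real. M \<ge> 1 \<longrightarrow>
            Limsup (at 0) (\<lambda>t. ereal (1 / (2 * M) *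
              integral {-M..M} (\<lambda>x. \<bar>(K \<alpha> \<nu> (x + t) - K \<alpha> \<nu> x) / t\<bar>))) = \<infinity>)
       \<and> \<not> locally_bv (K \<alpha> \<nu>)"
proof -
  define b :: nat where "b = 4 ^ \<nu>"
  define a where "a = real b powr - \<alpha>"
  interpret vdw_parameters a b
    unfolding a_def b_def using assms by (intro vdw_parameters_K) auto
  have K: "K \<alpha> \<nu> = W"
    unfolding a_def b_def by (rule K_eq_vdw_function)
  have holder_quotient: "Limsup (at 0) (\<lambda>t. ereal (\<bar>W (x + t) - W x\<bar> / \<bar>t\<bar> powr \<beta>)) = \<infinity>"
    if "\<alpha> < \<beta>" for x \<beta>
  proof (rule Limsup_W_holder_quotient)
    have "1 < real b powr (\<beta> - \<alpha>)"
      using b_ge_4 that by simp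
    then show "1 < a * real b powr \<beta>"
      using b_ge_4 by (simp add: a_def powr_diff powr_minus field_simps)
  qed
  have not_holder: "\<not> holder_at W \<beta> x" if "\<alpha> < \<beta>" for x \<beta>
    using holder_at_imp_Limsup_less_infinity holder_quotient[OF that] by force
  show ?thesis
    unfolding K locally_bv_def
    using holder_quotient not_holder differentiable_imp_holder_at_1 \<open>\<alpha> < 1\<close>
      Limsup_W_mean_difference_quotient not_bv_on_W by blast
qed

end
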